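(* Let $A=\mathbb{R}^4_\theta$ with its Riemannian structure $(g,(\nabla,\sigma))$, and $B=A/(f)$ the noncommutative hypersurface with $\nu=\mathrm{d}f$, as in the context. Then (A1) $\sigma(\omega\otimes_A\nu)=\nu\otimes_A\omega$ and $\sigma(\nu\otimes_A\omega)=\omega\otimes_A\nu$ for all $\omega\in\Omega^1_A$, and (A2) $\sigma\circ(\Pi\otimes_B\mathrm{id})=(\mathrm{id}\otimes_B\Pi)\circ\sigma$ and $\sigma\circ(\mathrm{id}\otimes_B\Pi)=(\Pi\otimes_B\mathrm{id})\circ\sigma$ on $q_!(\Omega^1_A)\otimes_Bq_!(\Omega^1_A)$ hold. The induced Riemannian structure $(g_B,(\nabla_B,\sigma_B))$ on $(\Omega^1_B,\mathrm{d}_B)$ is explicitly given (all expressions denoting classes) by $g_B=\sum_{i,j}g_{ij}\,\mathrm{d}z^i\otimes_B\mathrm{d}z^j$, $g_B^{-1}(\mathrm{d}z^i\otimes_B\mathrm{d}z^j)=g^{ij}-z^iz^j$, $\nabla_B(\mathrm{d}z^i)=-z^i\sum_{k,l}g_{kl}\,\mathrm{d}z^k\otimes_B\mathrm{d}z^l$, $\sigma_B(\mathrm{d}z^i\otimes_B\mathrm{d}z^j)=R^{ji}\,\mathrm{d}z^j\otimes_B\mathrm{d}z^i$.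
   Context: $\theta\in\mathbb{R}$; $R=(R^{ab})$ (row $a$, column $b$) with rows $(1,e^{-i\theta},1,e^{i\theta})$, $(e^{i\theta},1,e^{-i\theta},1)$, $(1,e^{i\theta},1,e^{-i\theta})$, $(e^{-i\theta},1,e^{i\theta},1)$; $A=\mathbb{C}\langle z^1,\dots,z^4\rangle/(z^iz^j-R^{ji}z^jz^i)$; $\Omega^1_A=\bigoplus_iA\,\mathrm{d}z^i$ free left module with $\mathrm{d}z^i\,z^j=R^{ji}z^j\mathrm{d}z^i$, $\mathrm{d}$ the Leibniz extension of $z^i\mapsto\mathrm{d}z^i$. $P$ the matrix with rows $(0,0,1,0),(0,0,0,1),(1,0,0,0),(0,1,0,0)$; $(g_{ij})=\tfrac12P$, $(g^{ij})=2P$; $g=\sum g_{ij}\mathrm{d}z^i\otimes_A\mathrm{d}z^j$, $g^{-1}(\mathrm{d}z^i\otimes_A\mathrm{d}z^j)=g^{ij}$; $\nabla(\sum a_i\mathrm{d}z^i)=\sum\mathrm{d}a_i\otimes_A\mathrm{d}z^i$; $\sigma$ left $A$-linear with $\sigma(\mathrm{d}z^i\otimes_A\mathrm{d}z^j)=R^{ji}\mathrm{d}z^j\otimes_A\mathrm{d}z^i$. $f=\tfrac12(z^1z^3+z^2z^4-1)$, central; $B=A/(f)$, $q:A\to B$, classes $[\cdot]$; $\nu=\mathrm{d}f=\sum g_{ij}z^i\mathrm{d}z^j$ (central, $[g^{-1}(\nu\otimes\nu)]=1$). $q_!(\Omega^1_A)=\Omega^1_A/(f\Omega^1_A+\Omega^1_Af)$;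 $\Omega^1_B=q_!(\Omega^1_A)/N^1_B$ with $N^1_B$ the $B$-subbimodule generated by $[\mathrm{d}a]$, $a\in(f)$; $\mathrm{d}_B[a]=[\mathrm{d}a]$. $\Pi[\omega]=[\omega-g^{-1}(\omega\otimes_A\nu)\nu]$ on $q_!(\Omega^1_A)$, inducing a section $\Pi:\Omega^1_B\to q_!(\Omega^1_A)$ of the quotient map; $\sigma$ and $\nabla$ descend to classes. Induced structure: $g_B$ is the image of $[g]$ in $\Omega^1_B\otimes_B\Omega^1_B$; $g_B^{-1}([\omega]\otimes_B[\zeta])=[g^{-1}(\Pi(\omega)\otimes_A\Pi(\zeta))]$; $\nabla_B([\omega])$ the image of $[\nabla(\Pi(\omega))]$ in $\Omega^1_B\otimes_B\Omega^1_B$; $\sigma_B([\omega]\otimes_B[\zeta])=[\sigma(\omega\otimes_A\zeta)]$. *)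

theory Defs
  imports Complex_Main "HOL-Library.Function_Algebras"
begin

text \<open>The free algebra
  C<z1,...,z4> is modelled by functions from words (nat lists over the
  letters 1..4) to complex coefficients; polynomials are those with finite
  support on words over 1..4.  All quotients (A, B, Omega^1_A, q_!,
  Omega^1_B, and the tensor products) are realised as equivalence relations
  on representatives, given by explicit generated submodules.\<close>

type_synonym fa = "nat list \<Rightarrow> complex"
type_synonym form1 = "nat \<Rightarrow> fa"          \<comment> \<open>coefficient of dz^k\<close>
type_synonym form2 = "nat \<Rightarrow> nat \<Rightarrow> fa"  \<comment> \<open>coefficient of dz^i (x) dz^j\<close>

definition poly_fa :: "fa \<Rightarrow> bool" where
  "poly_fa p \<longleftrightarrow> finite {w. p w \<noteq> 0} \<and> (\<forall>w. p w \<noteq> 0 \<longrightarrow> set w \<subseteq> {1..4})"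

definition polyO :: "form1 \<Rightarrow> bool" where
  "polyO \<omega> \<longleftrightarrow> (\<forall>k\<in>{1..4}. poly_fa (\<omega> k))"

definition polyT :: "form2 \<Rightarrow> bool" where
  "polyT T \<longleftrightarrow> (\<forall>i\<in>{1..4}. \<forall>j\<in>{1..4}. poly_fa (T i j))"

definition fmul :: "fa \<Rightarrow> fa \<Rightarrow> fa" where
  "fmul p q = (\<lambda>w. \<Sum>k\<le>length w. p (take k w) * q (drop k w))"

definition csc :: "complex \<Rightarrow> fa \<Rightarrow> fa" where
  "csc c p = (\<lambda>w. c * p w)"

definition mono :: "nat list \<Rightarrow> fa" where
  "mono u = (\<lambda>w. if w = u then 1 else 0)"

definition cst :: "complex \<Rightarrow> fa" where
  "cst c = (\<lambda>w. if w = [] then c else 0)"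

definition gen :: "nat \<Rightarrow> fa" where
  "gen i = mono [i]"

definition Rm :: "real \<Rightarrow> nat \<Rightarrow> nat \<Rightarrow> complex" where
  "Rm \<theta> a b = (let e = exp (\<i> * complex_of_real \<theta>); e' = exp (- \<i> * complex_of_real \<theta>) in
     [[1, e', 1, e], [e, 1, e', 1], [1, e, 1, e'], [e', 1, e, 1]] ! (a - 1) ! (b - 1))"

definition Pm :: "nat \<Rightarrow> nat \<Rightarrow> complex" where
  "Pm i j = (if (i, j) \<in> {(1,3), (2,4), (3,1), (4,2)} then 1 else 0)"

definition gmat :: "nat \<Rightarrow> nat \<Rightarrow> complex" where
  "gmat i j = Pm i j / 2"

definition ginvmat :: "nat \<Rightarrow> nat \<Rightarrow> complex" where
  "ginvmat i j = 2 * Pm i j"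

definition rels :: "real \<Rightarrow> fa set" where
  "rels \<theta> = {fmul (gen i) (gen j) - csc (Rm \<theta> j i) (fmul (gen j) (gen i)) | i j.
               i \<in> {1..4} \<and> j \<in> {1..4}}"

definition f_el :: fa where
  "f_el = csc (1/2) (fmul (gen 1) (gen 3) + fmul (gen 2) (gen 4) - cst 1)"

inductive_set ideal_gen :: "fa set \<Rightarrow> fa set" for G where
  ig_zero: "0 \<in> ideal_gen G"
| ig_gen: "g \<in> G \<Longrightarrow> g \<in> ideal_gen G"
| ig_add: "x \<in> ideal_gen G \<Longrightarrow> y \<in> ideal_gen G \<Longrightarrow> x + y \<in> ideal_gen G"
| ig_smult: "x \<in> ideal_gen G \<Longrightarrow> csc c x \<in> ideal_gen G"
| ig_mult: "x \<in> ideal_gen G \<Longrightarrow> set u \<subseteq> {1..4} \<Longrightarrow> set v \<subseteq> {1..4} \<Longrightarrow>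
            fmul (mono u) (fmul x (mono v)) \<in> ideal_gen G"

text \<open>Preimages in the free algebra of 0 in A and of the ideal (f) of A.\<close>
definition IA :: "real \<Rightarrow> fa set" where
  "IA \<theta> = ideal_gen (rels \<theta>)"

definition IB :: "real \<Rightarrow> fa set" where
  "IB \<theta> = ideal_gen (rels \<theta> \<union> {f_el})"

definition eqA :: "real \<Rightarrow> fa \<Rightarrow> fa \<Rightarrow> bool" where
  "eqA \<theta> p q \<longleftrightarrow> p - q \<in> IA \<theta>"

definition eqB :: "real \<Rightarrow> fa \<Rightarrow> fa \<Rightarrow> bool" where
  "eqB \<theta> p q \<longleftrightarrow> p - q \<in> IB \<theta>"

text \<open>Commutation of dz^i past a word: dz^i z^k = R^{ki} z^k dz^i.\<close>
definition ph :: "real \<Rightarrow> nat \<Rightarrow> nat list \<Rightarrow> complex" where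
  "ph \<theta> i w = prod_list (map (\<lambda>k. Rm \<theta> k i) w)"

definition shift :: "real \<Rightarrow> nat \<Rightarrow> fa \<Rightarrow> fa" where
  "shift \<theta> i b = (\<lambda>w. ph \<theta> i w * b w)"

definition dz :: "nat \<Rightarrow> form1" where
  "dz i = (\<lambda>k. if k = i then cst 1 else 0)"

definition lsc :: "fa \<Rightarrow> form1 \<Rightarrow> form1" where
  "lsc a \<omega> = (\<lambda>k. fmul a (\<omega> k))"

definition rsc :: "real \<Rightarrow> form1 \<Rightarrow> fa \<Rightarrow> form1" where
  "rsc \<theta> \<omega> b = (\<lambda>k. fmul (\<omega> k) (shift \<theta> k b))"

text \<open>Leibniz extension of z^i to dz^i, written in the left basis: coefficient
  of dz^k at word v collects the words with the letter k inserted in v.\<close>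
definition dA :: "real \<Rightarrow> fa \<Rightarrow> form1" where
  "dA \<theta> p = (\<lambda>k v. \<Sum>m\<le>length v. p (take m v @ k # drop m v) * ph \<theta> k (drop m v))"

definition nu :: form1 where
  "nu = (\<lambda>j. \<Sum>i\<in>{1..4}. csc (gmat i j) (gen i))"

definition eqOA :: "real \<Rightarrow> form1 \<Rightarrow> form1 \<Rightarrow> bool" where
  "eqOA \<theta> \<omega> \<zeta> \<longleftrightarrow> (\<forall>k\<in>{1..4}. eqA \<theta> (\<omega> k) (\<zeta> k))"

definition tens :: "real \<Rightarrow> form1 \<Rightarrow> form1 \<Rightarrow> form2" where
  "tens \<theta> \<omega> \<zeta> = (\<lambda>i j. fmul (\<omega> i) (shift \<theta> i (\<zeta> j)))"

definition tlsc :: "fa \<Rightarrow> form2 \<Rightarrow> form2" where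
  "tlsc a T = (\<lambda>i j. fmul a (T i j))"

definition eqTA :: "real \<Rightarrow> form2 \<Rightarrow> form2 \<Rightarrow> bool" where
  "eqTA \<theta> S T \<longleftrightarrow> (\<forall>i\<in>{1..4}. \<forall>j\<in>{1..4}. eqA \<theta> (S i j) (T i j))"

definition gA :: form2 where
  "gA = (\<lambda>i j. cst (gmat i j))"

definition ginv :: "form2 \<Rightarrow> fa" where
  "ginv T = (\<Sum>i\<in>{1..4}. \<Sum>j\<in>{1..4}. csc (ginvmat i j) (T i j))"

definition sigma :: "real \<Rightarrow> form2 \<Rightarrow> form2" where
  "sigma \<theta> T = (\<lambda>a b. csc (Rm \<theta> a b) (T b a))"

definition nabla :: "real \<Rightarrow> form1 \<Rightarrow> form2" where
  "nabla \<theta> \<omega> = (\<Sum>k\<in>{1..4}. tens \<theta> (dA \<theta> (\<omega> k)) (dz k))"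

definition Pi :: "real \<Rightarrow> form1 \<Rightarrow> form1" where
  "Pi \<theta> \<omega> = \<omega> - lsc (ginv (tens \<theta> \<omega> nu)) nu"

definition PiL :: "real \<Rightarrow> form2 \<Rightarrow> form2" where
  "PiL \<theta> T = (\<Sum>i\<in>{1..4}. \<Sum>j\<in>{1..4}. tlsc (T i j) (tens \<theta> (Pi \<theta> (dz i)) (dz j)))"

definition PiR :: "real \<Rightarrow> form2 \<Rightarrow> form2" where
  "PiR \<theta> T = (\<Sum>i\<in>{1..4}. \<Sum>j\<in>{1..4}. tlsc (T i j) (tens \<theta> (dz i) (Pi \<theta> (dz j))))"

text \<open>Preimage in Omega^1_A of f Omega^1_A + Omega^1_A f (kernel of Omega^1_A -> q_!(Omega^1_A)).\<close>
definition QsubA :: "real \<Rightarrow> form1 set" where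
  "QsubA \<theta> = {x. \<exists>\<omega> \<omega>'. polyO \<omega> \<and> polyO \<omega>' \<and> eqOA \<theta> x (lsc f_el \<omega> + rsc \<theta> \<omega>' f_el)}"

text \<open>Preimage in Omega^1_A of N^1_B (kernel of Omega^1_A -> Omega^1_B).\<close>
inductive_set NB :: "real \<Rightarrow> form1 set" for \<theta> where
  nb_q: "x \<in> QsubA \<theta> \<Longrightarrow> x \<in> NB \<theta>"
| nb_d: "a \<in> IB \<theta> \<Longrightarrow> dA \<theta> a \<in> NB \<theta>"
| nb_l: "x \<in> NB \<theta> \<Longrightarrow> set u \<subseteq> {1..4} \<Longrightarrow> lsc (mono u) x \<in> NB \<theta>"
| nb_r: "x \<in> NB \<theta> \<Longrightarrow> set u \<subseteq> {1..4} \<Longrightarrow> rsc \<theta> x (mono u) \<in> NB \<theta>"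
| nb_add: "x \<in> NB \<theta> \<Longrightarrow> y \<in> NB \<theta> \<Longrightarrow> x + y \<in> NB \<theta>"
| nb_smult: "x \<in> NB \<theta> \<Longrightarrow> (\<lambda>k. csc c (x k)) \<in> NB \<theta>"
| nb_eq: "x \<in> NB \<theta> \<Longrightarrow> eqOA \<theta> y x \<Longrightarrow> y \<in> NB \<theta>"

text \<open>Kernel of Omega^1_A (x)_A Omega^1_A -> q_!(Omega^1_A) (x)_B q_!(Omega^1_A).\<close>
inductive_set KQ :: "real \<Rightarrow> form2 set" for \<theta> where
  kq_zero: "0 \<in> KQ \<theta>"
| kq_l: "x \<in> QsubA \<theta> \<Longrightarrow> polyO \<zeta> \<Longrightarrow> tens \<theta> x \<zeta> \<in> KQ \<theta>"
| kq_r: "polyO \<omega> \<Longrightarrow> y \<in> QsubA \<theta> \<Longrightarrow> tens \<theta> \<omega> y \<in> KQ \<theta>"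
| kq_add: "S \<in> KQ \<theta> \<Longrightarrow> T \<in> KQ \<theta> \<Longrightarrow> S + T \<in> KQ \<theta>"
| kq_eq: "S \<in> KQ \<theta> \<Longrightarrow> eqTA \<theta> T S \<Longrightarrow> T \<in> KQ \<theta>"

text \<open>Kernel of Omega^1_A (x)_A Omega^1_A -> Omega^1_B (x)_B Omega^1_B.\<close>
inductive_set KB :: "real \<Rightarrow> form2 set" for \<theta> where
  kb_zero: "0 \<in> KB \<theta>"
| kb_l: "x \<in> NB \<theta> \<Longrightarrow> polyO \<zeta> \<Longrightarrow> tens \<theta> x \<zeta> \<in> KB \<theta>"
| kb_r: "polyO \<omega> \<Longrightarrow> y \<in> NB \<theta> \<Longrightarrow> tens \<theta> \<omega> y \<in> KB \<theta>"
| kb_add: "S \<in> KB \<theta> \<Longrightarrow> T \<in> KB \<theta> \<Longrightarrow> S + T \<in> KB \<theta>"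
| kb_eq: "S \<in> KB \<theta> \<Longrightarrow> eqTA \<theta> T S \<Longrightarrow> T \<in> KB \<theta>"

definition eqTQ :: "real \<Rightarrow> form2 \<Rightarrow> form2 \<Rightarrow> bool" where
  "eqTQ \<theta> S T \<longleftrightarrow> S - T \<in> KQ \<theta>"

definition eqTB :: "real \<Rightarrow> form2 \<Rightarrow> form2 \<Rightarrow> bool" where
  "eqTB \<theta> S T \<longleftrightarrow> S - T \<in> KB \<theta>"

end

theory Submission
  imports Defs
begin

text \<open>Write a' for the partner of an index a (1 and 3, 2 and 4 are partners), so that
  nu = 1/2 sum_a z^a' dz^a. Since R^ka R^ka' = 1, moving z^a' through a word costs exactly the
  inverse of the phase of dz^a: nu is central, and sigma, which only permutes and rescales
  components, exchanges omega (x) nu and nu (x) omega (A1). The identities R^ab R^ba = 1 make (A2)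
  hold already on representatives.

  Since Pi(dz^i) = dz^i - z^i nu, in A the inverse metric of Pi(dz^i) (x) Pi(dz^j) is
  g^ij - 2 z^i z^j + z^i z^j g^-1(nu (x) nu), and g^-1(nu (x) nu) = z^1 z^3 + z^2 z^4 = 2 f + 1.
  Finally nabla(Pi(dz^i)) = - z^i g - dz^i (x) nu, whose last term vanishes in
  Omega^1_B (x) Omega^1_B because nu = df lies in N^1_B.\<close>

section \<open>Arithmetic of the free algebra\<close>

lemma sum_fun_apply: "(\<Sum>i\<in>A. F i) x = (\<Sum>i\<in>A. F i x)"
  by (induction A rule: infinite_finite_induct) auto

lemma csc_apply [simp]: "csc c p w = c * p w"
  by (simp add: csc_def)

lemma fmul_add_left: "fmul (p + q) r = fmul p r + fmul q r"
  by (simp add: fmul_def fun_eq_iff distrib_right sum.distrib)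

lemma fmul_add_right: "fmul r (p + q) = fmul r p + fmul r q"
  by (simp add: fmul_def fun_eq_iff distrib_left sum.distrib)

lemma fmul_diff_left: "fmul (p - q) r = fmul p r - fmul q r"
  by (simp add: fmul_def fun_eq_iff left_diff_distrib sum_subtractf)

lemma fmul_diff_right: "fmul r (p - q) = fmul r p - fmul r q"
  by (simp add: fmul_def fun_eq_iff right_diff_distrib sum_subtractf)

lemma fmul_csc_left: "fmul (csc c p) q = csc c (fmul p q)"
  by (simp add: fmul_def fun_eq_iff sum_distrib_left mult.assoc)

lemma fmul_csc_right: "fmul p (csc c q) = csc c (fmul p q)"
  by (simp add: fmul_def fun_eq_iff sum_distrib_left mult_ac)

lemma fmul_zero_left: "fmul 0 q = 0"
  by (simp add: fmul_def fun_eq_iff)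

lemma fmul_zero_right: "fmul q 0 = 0"
  by (simp add: fmul_def fun_eq_iff)

lemma fmul_sum_left: "fmul (\<Sum>i\<in>A. F i) q = (\<Sum>i\<in>A. fmul (F i) q)"
  by (induction A rule: infinite_finite_induct) 
    (simp_all only: sum.insert sum.empty sum.infinite not_False_eq_True fmul_zero_left fmul_add_left)

lemma fmul_sum_right: "fmul q (\<Sum>i\<in>A. F i) = (\<Sum>i\<in>A. fmul q (F i))"
  by (induction A rule: infinite_finite_induct) 
    (simp_all only: sum.insert sum.empty sum.infinite not_False_eq_True fmul_zero_right fmul_add_right)

lemmas fmul_linear = fmul_add_left fmul_add_right fmul_diff_left fmul_diff_right
  fmul_csc_left fmul_csc_right fmul_zero_left fmul_zero_right

lemma fmul_mono_mono: "fmul (mono u) (mono v) = mono (u @ v)"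
proof (rule ext)
  fix w
  have "fmul (mono u) (mono v) w = (\<Sum>k\<le>length w. if k = length u \<and> w = u @ v then 1 else 0)"
    unfolding fmul_def mono_def by (rule sum.cong) (auto simp: append_eq_conv_conj)
  then show "fmul (mono u) (mono v) w = mono (u @ v) w"
    by (auto simp: mono_def)
qed

lemma fmul_one_left: "fmul (cst 1) p = p"
  by (simp add: fmul_def cst_def fun_eq_iff sum.atMost_shift)

lemma fmul_one_right: "fmul p (cst 1) = p"
proof (rule ext)
  fix w
  have "fmul p (cst 1) w = (\<Sum>k\<le>length w. if k = length w then p w else 0)"
    unfolding fmul_def cst_def by (rule sum.cong) auto
  then show "fmul p (cst 1) w = p w"
    by simp
qed

lemma csc_cst: "csc c (cst d) = cst (c * d)"
  by (simp add: cst_def fun_eq_iff)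

lemma fmul_cst_right: "fmul p (cst c) = csc c p"
  using fmul_csc_right[of p c "cst 1"] by (simp add: csc_cst fmul_one_right)

lemma csc_csc: "csc a (csc b p) = csc (a * b) p"
  by (simp add: csc_def fun_eq_iff)

lemma csc_one: "csc 1 p = p"
  by (simp add: csc_def fun_eq_iff)

lemma csc_zero_left: "csc 0 p = 0"
  by (simp add: csc_def fun_eq_iff)

lemma csc_zero_right: "csc c 0 = 0"
  by (simp add: csc_def fun_eq_iff)

lemma csc_minus_one: "csc (-1) p = - p"
  by (simp add: csc_def fun_eq_iff)

lemma csc_sum: "csc c (\<Sum>i\<in>A. F i) = (\<Sum>i\<in>A. csc c (F i))"
  by (simp add: csc_def fun_eq_iff sum_fun_apply sum_distrib_left)

lemma csc_add: "csc c (p + q) = csc c p + csc c q"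
  by (simp add: csc_def fun_eq_iff algebra_simps)

lemma csc_diff: "csc c (p - q) = csc c p - csc c q"
  by (simp add: csc_def fun_eq_iff algebra_simps)

lemma csc_neg: "csc c (- p) = - csc c p"
  by (simp add: csc_def fun_eq_iff)

lemma shift_mono: "shift \<theta> i (mono u) = csc (ph \<theta> i u) (mono u)"
  by (simp add: shift_def mono_def fun_eq_iff)

lemma shift_gen: "shift \<theta> a (gen c) = csc (Rm \<theta> c a) (gen c)"
  by (simp add: gen_def shift_mono ph_def)

lemma shift_cst: "shift \<theta> i (cst c) = cst c"
  by (simp add: shift_def cst_def ph_def fun_eq_iff)

lemma shift_diff: "shift \<theta> i (p - q) = shift \<theta> i p - shift \<theta> i q"
  by (simp add: shift_def fun_eq_iff algebra_simps)

lemma shift_csc: "shift \<theta> i (csc c p) = csc c (shift \<theta> i p)"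
  by (simp add: shift_def fun_eq_iff)

lemma shift_zero: "shift \<theta> i 0 = 0"
  by (simp add: shift_def fun_eq_iff)

lemma shift_sum: "shift \<theta> i (\<Sum>j\<in>A. F j) = (\<Sum>j\<in>A. shift \<theta> i (F j))"
  by (simp add: shift_def fun_eq_iff sum_fun_apply sum_distrib_left)

lemma shift_fmul: "shift \<theta> i (fmul p q) = fmul (shift \<theta> i p) (shift \<theta> i q)"
proof (rule ext)
  fix w
  have "ph \<theta> i w = ph \<theta> i (take k w) * ph \<theta> i (drop k w)" for k
    by (metis append_take_drop_id ph_def map_append prod_list.append)
  then show "shift \<theta> i (fmul p q) w = fmul (shift \<theta> i p) (shift \<theta> i q) w"
    unfolding shift_def fmul_def by (simp add: sum_distrib_left mult_ac)
qed

lemma poly_fa_monomial_expansion: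
  assumes "poly_fa p"
  shows "p = (\<Sum>w | p w \<noteq> 0. csc (p w) (mono w))"
proof (rule ext)
  fix x
  have "finite {w. p w \<noteq> 0}"
    using assms by (simp add: poly_fa_def)
  moreover have "(\<Sum>w | p w \<noteq> 0. csc (p w) (mono w)) x = (\<Sum>w | p w \<noteq> 0. if x = w then p w else 0)"
    by (auto simp: sum_fun_apply mono_def intro!: sum.cong)
  ultimately show "p x = (\<Sum>w | p w \<noteq> 0. csc (p w) (mono w)) x"
    by (simp add: sum.delta')
qed

section \<open>Index combinatorics of \<open>R\<close> and \<open>g\<close>\<close>

definition partner :: "nat \<Rightarrow> nat" where
  "partner a = (a + 1) mod 4 + 1"

lemma index_cases: "a \<in> {1..4::nat} \<Longrightarrow> a = 1 \<or> a = 2 \<or> a = 3 \<or> a = 4"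
  by auto

lemma sum_index4: "(\<Sum>i\<in>{1..4::nat}. F i) = F 1 + F 2 + F 3 + F 4"
  by (simp add: numeral_eq_Suc add_ac)

lemma partner_simps [simp]: "partner (Suc 0) = 3" "partner 2 = 4" "partner 3 = 1" "partner 4 = 2"
  by (simp_all add: partner_def)

lemma partner_in_range: "a \<in> {1..4} \<Longrightarrow> partner a \<in> {1..4}"
  using index_cases[of a] by auto

lemma partner_partner: "a \<in> {1..4} \<Longrightarrow> partner (partner a) = a"
  using index_cases[of a] by auto

lemma Pm_partner: "a \<in> {1..4} \<Longrightarrow> Pm a b = (if b = partner a then 1 else 0)"
  using index_cases[of a] by (auto simp: Pm_def)

lemma Rm_diag: "a \<in> {1..4} \<Longrightarrow> Rm \<theta> a a = 1"
  using index_cases[of a] by (auto simp: Rm_def Let_def)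

lemma Rm_partners: "Rm \<theta> (Suc 0) 3 = 1" "Rm \<theta> 3 (Suc 0) = 1" "Rm \<theta> 2 4 = 1" "Rm \<theta> 4 2 = 1"
  by (auto simp: Rm_def Let_def)

lemma Rm_mult_transpose: "a \<in> {1..4} \<Longrightarrow> b \<in> {1..4} \<Longrightarrow> Rm \<theta> a b * Rm \<theta> b a = 1"
  using index_cases[of a] index_cases[of b]
  by (auto simp: Rm_def Let_def exp_minus_inverse exp_minus_inverse[of "- _", simplified])

lemma Rm_mult_partner_col: "a \<in> {1..4} \<Longrightarrow> b \<in> {1..4} \<Longrightarrow> Rm \<theta> a b * Rm \<theta> a (partner b) = 1"
  using index_cases[of a] index_cases[of b]
  by (auto simp: Rm_def Let_def exp_minus_inverse exp_minus_inverse[of "- _", simplified])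

lemma Rm_partner_transpose: "a \<in> {1..4} \<Longrightarrow> b \<in> {1..4} \<Longrightarrow> Rm \<theta> (partner b) a = Rm \<theta> a b"
  using index_cases[of a] index_cases[of b] by (auto simp: Rm_def Let_def)

lemma ph_mult_ph_partner:
  "set w \<subseteq> {1..4} \<Longrightarrow> a \<in> {1..4} \<Longrightarrow> ph \<theta> a w * ph \<theta> (partner a) w = 1"
proof (induction w)
  case Nil
  then show ?case by (simp add: ph_def)
next
  case (Cons x w)
  have "ph \<theta> a (x # w) * ph \<theta> (partner a) (x # w) =
      (Rm \<theta> x a * Rm \<theta> x (partner a)) * (ph \<theta> a w * ph \<theta> (partner a) w)"
    by (simp add: ph_def mult_ac)
  then show ?case
    using Cons Rm_mult_partner_col[of x a \<theta>] by simp
qed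

lemma nu_partner: "j \<in> {1..4} \<Longrightarrow> nu j = csc (1/2) (gen (partner j))"
  unfolding nu_def sum_index4 using index_cases[of j] by (auto simp: gmat_def Pm_def csc_zero_left)

lemma shift_nu: "a \<in> {1..4} \<Longrightarrow> b \<in> {1..4} \<Longrightarrow> shift \<theta> a (nu b) = csc (Rm \<theta> a b) (nu b)"
  by (simp add: nu_partner shift_csc shift_gen csc_csc Rm_partner_transpose mult.commute)

lemma ginv_tens:
  "ginv (tens \<theta> \<alpha> \<beta>) = (\<Sum>a\<in>{1..4}. csc 2 (fmul (\<alpha> a) (shift \<theta> a (\<beta> (partner a)))))"
proof -
  have "(\<Sum>j\<in>{1..4}. csc (2 * Pm a j) (X j)) = csc 2 (X (partner a))" if "a \<in> {1..4}" for a X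
    unfolding sum_index4 using index_cases[OF that] by (auto simp: Pm_def csc_zero_left)
  then show ?thesis
    unfolding ginv_def tens_def ginvmat_def by (intro sum.cong) auto
qed

section \<open>Relations of \<open>A\<close> and \<open>B\<close>\<close>

lemma ideal_gen_sum: "(\<And>i. i \<in> A \<Longrightarrow> F i \<in> ideal_gen G) \<Longrightarrow> (\<Sum>i\<in>A. F i) \<in> ideal_gen G"
  by (induction A rule: infinite_finite_induct) (auto intro: ig_zero ig_add)

lemma ideal_gen_mono: "G \<subseteq> H \<Longrightarrow> x \<in> ideal_gen G \<Longrightarrow> x \<in> ideal_gen H"
  by (erule ideal_gen.induct) (blast intro: ideal_gen.intros)+

lemma IA_subset_IB: "IA \<theta> \<subseteq> IB \<theta>"
  unfolding IA_def IB_def by (auto intro: ideal_gen_mono)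

lemma mono_swap_in_IA:
  assumes "set u \<subseteq> {1..4}" "set v \<subseteq> {1..4}" "a \<in> {1..4}" "b \<in> {1..4}"
  shows "mono (u @ a # b # v) - csc (Rm \<theta> b a) (mono (u @ b # a # v)) \<in> IA \<theta>"
proof -
  have "fmul (gen a) (gen b) - csc (Rm \<theta> b a) (fmul (gen b) (gen a)) \<in> rels \<theta>"
    using assms(3,4) unfolding rels_def by blast
  then have "fmul (mono u) (fmul (fmul (gen a) (gen b) - csc (Rm \<theta> b a) (fmul (gen b) (gen a))) (mono v))
      \<in> IA \<theta>"
    unfolding IA_def using assms(1,2) by (intro ig_mult ig_gen)
  then show ?thesis
    by (simp add: fmul_linear gen_def fmul_mono_mono)
qed

lemma mono_f_in_IB:
  assumes "set u \<subseteq> {1..4}" "set v \<subseteq> {1..4}"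
  shows "mono (u @ 1 # 3 # v) + mono (u @ 2 # 4 # v) - mono (u @ v) \<in> IB \<theta>"
proof -
  have "csc 2 (fmul (mono u) (fmul f_el (mono v))) \<in> IB \<theta>"
    unfolding IB_def using assms by (intro ig_smult ig_mult ig_gen) simp_all
  moreover have "cst 1 = mono []"
    by (simp add: cst_def mono_def fun_eq_iff)
  ultimately show ?thesis
    by (simp add: f_el_def fmul_linear gen_def fmul_mono_mono csc_csc csc_add csc_diff csc_one)
qed

lemma mono_letter_commute_in_IA:
  "set w \<subseteq> {1..4} \<Longrightarrow> c \<in> {1..4} \<Longrightarrow> mono (c # w) - csc (ph \<theta> c w) (mono (w @ [c])) \<in> IA \<theta>"
proof (induction w)
  case Nil
  have "mono [c] - csc (ph \<theta> c []) (mono ([] @ [c])) = 0"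
    by (simp add: ph_def csc_one)
  then show ?case
    by (simp only: IA_def ig_zero)
next
  case (Cons x w)
  have swap: "mono (c # x # w) - csc (Rm \<theta> x c) (mono (x # c # w)) \<in> IA \<theta>"
    using mono_swap_in_IA[of "[]" w c x \<theta>] Cons.prems by simp
  have "mono (c # w) - csc (ph \<theta> c w) (mono (w @ [c])) \<in> IA \<theta>"
    using Cons.prems by (intro Cons.IH) auto
  then have "fmul (mono [x]) (fmul (mono (c # w) - csc (ph \<theta> c w) (mono (w @ [c]))) (mono [])) \<in> IA \<theta>"
    using Cons.prems unfolding IA_def by (intro ig_mult) auto
  then have "mono (x # c # w) - csc (ph \<theta> c w) (mono (x # w @ [c])) \<in> IA \<theta>"
    by (simp add: fmul_linear fmul_mono_mono)
  then have "(mono (c # x # w) - csc (Rm \<theta> x c) (mono (x # c # w))) +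
      csc (Rm \<theta> x c) (mono (x # c # w) - csc (ph \<theta> c w) (mono (x # w @ [c]))) \<in> IA \<theta>"
    using swap unfolding IA_def by (intro ig_add ig_smult)
  moreover have "(mono (c # x # w) - csc (Rm \<theta> x c) (mono (x # c # w))) +
      csc (Rm \<theta> x c) (mono (x # c # w) - csc (ph \<theta> c w) (mono (x # w @ [c]))) =
      mono (c # x # w) - csc (ph \<theta> c (x # w)) (mono ((x # w) @ [c]))"
    by (simp add: csc_diff csc_csc ph_def)
  ultimately show ?case
    by (simp only: append_Cons)
qed

lemma gen_partner_commute_in_IA:
  assumes p: "poly_fa p" and a: "a \<in> {1..4}"
  shows "fmul (gen (partner a)) (shift \<theta> a p) - fmul p (gen (partner a)) \<in> IA \<theta>"
proof -
  define S where "S = {w. p w \<noteq> 0}"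
  have p_eq: "p = (\<Sum>w\<in>S. csc (p w) (mono w))"
    using poly_fa_monomial_expansion[OF p] by (simp add: S_def)
  have S_words: "set w \<subseteq> {1..4}" if "w \<in> S" for w
    using p that by (auto simp: S_def poly_fa_def)
  have "fmul (gen (partner a)) (shift \<theta> a p) - fmul p (gen (partner a)) =
      (\<Sum>w\<in>S. csc (p w * ph \<theta> a w) (mono (partner a # w)) - csc (p w) (mono (w @ [partner a])))"
    by (subst (1 2) p_eq) (simp add: shift_sum fmul_sum_left fmul_sum_right shift_csc shift_mono
        fmul_csc_left fmul_csc_right csc_csc gen_def fmul_mono_mono sum_subtractf mult.commute)
  also have "\<dots> = (\<Sum>w\<in>S. csc (p w * ph \<theta> a w)
      (mono (partner a # w) - csc (ph \<theta> (partner a) w) (mono (w @ [partner a]))))"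
    using ph_mult_ph_partner[OF S_words a]
    by (intro sum.cong) (simp_all add: csc_diff csc_csc mult.assoc)
  also have "\<dots> \<in> IA \<theta>"
    using mono_letter_commute_in_IA[OF S_words partner_in_range[OF a]]
    unfolding IA_def by (intro ideal_gen_sum ig_smult) (simp add: IA_def)
  finally show ?thesis .
qed

section \<open>The braiding and the projection \<open>\<Pi>\<close>\<close>

lemma sigma_tens_form_nu:
  assumes "polyO \<omega>"
  shows "eqTA \<theta> (sigma \<theta> (tens \<theta> \<omega> nu)) (tens \<theta> nu \<omega>)"
  unfolding eqTA_def eqA_def
proof (intro ballI)
  fix a b :: nat
  assume a: "a \<in> {1..4}" and b: "b \<in> {1..4}"
  have "sigma \<theta> (tens \<theta> \<omega> nu) a b - tens \<theta> nu \<omega> a b =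
      csc (- 1/2) (fmul (gen (partner a)) (shift \<theta> a (\<omega> b)) - fmul (\<omega> b) (gen (partner a)))"
    using a b Rm_partner_transpose[OF b a, of \<theta>] Rm_mult_transpose[OF a b, of \<theta>]
    by (simp add: sigma_def tens_def shift_gen nu_partner fmul_csc_left fmul_csc_right csc_csc csc_diff
        shift_csc fun_eq_iff algebra_simps)
  also have "\<dots> \<in> IA \<theta>"
    using assms b unfolding polyO_def IA_def
    by (intro ig_smult gen_partner_commute_in_IA[OF _ a, unfolded IA_def]) blast
  finally show "sigma \<theta> (tens \<theta> \<omega> nu) a b - tens \<theta> nu \<omega> a b \<in> IA \<theta>" .
qed

lemma sigma_tens_nu_form:
  assumes "polyO \<omega>"
  shows "eqTA \<theta> (sigma \<theta> (tens \<theta> nu \<omega>)) (tens \<theta> \<omega> nu)"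
  unfolding eqTA_def eqA_def
proof (intro ballI)
  fix a b :: nat
  assume a: "a \<in> {1..4}" and b: "b \<in> {1..4}"
  have "sigma \<theta> (tens \<theta> nu \<omega>) a b - tens \<theta> \<omega> nu a b =
      csc (Rm \<theta> a b / 2) (fmul (gen (partner b)) (shift \<theta> b (\<omega> a)) - fmul (\<omega> a) (gen (partner b)))"
    using a b Rm_partner_transpose[OF a b, of \<theta>]
    by (simp add: sigma_def tens_def shift_gen nu_partner fmul_csc_left fmul_csc_right csc_csc csc_diff
        shift_csc fun_eq_iff algebra_simps)
  also have "\<dots> \<in> IA \<theta>"
    using assms a unfolding polyO_def IA_def
    by (intro ig_smult gen_partner_commute_in_IA[OF _ b, unfolded IA_def]) blast
  finally show "sigma \<theta> (tens \<theta> nu \<omega>) a b - tens \<theta> \<omega> nu a b \<in> IA \<theta>" .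
qed

lemma dz_apply: "dz i a = (if a = i then cst 1 else 0)"
  by (simp add: dz_def)

lemma Pi_dz: "i \<in> {1..4} \<Longrightarrow> Pi \<theta> (dz i) = dz i - lsc (gen i) nu"
  using index_cases[of i] unfolding Pi_def ginv_tens sum_index4
  by (auto simp: dz_apply fmul_zero_left fmul_one_left csc_zero_right nu_partner shift_csc shift_gen
      Rm_diag csc_csc csc_one)

lemma Pi_dz_apply:
  "i \<in> {1..4} \<Longrightarrow> a \<in> {1..4} \<Longrightarrow> Pi \<theta> (dz i) a = dz i a - csc (1/2) (mono [i, partner a])"
  by (simp add: Pi_dz lsc_def nu_partner fmul_csc_right gen_def fmul_mono_mono)

lemma PiL_apply:
  assumes "a \<in> {1..4}" "b \<in> {1..4}"
  shows "PiL \<theta> T a b = T a b - (\<Sum>i\<in>{1..4}. fmul (T i b) (fmul (gen i) (nu a)))"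
proof -
  have "PiL \<theta> T a b = (\<Sum>i\<in>{1..4}. \<Sum>j\<in>{1..4}. if j = b then fmul (T i b) (Pi \<theta> (dz i) a) else 0)"
    unfolding PiL_def
    by (simp add: sum_fun_apply tlsc_def tens_def dz_apply shift_cst shift_zero fmul_one_right
        fmul_zero_right if_distrib cong: if_cong)
  also have "\<dots> = (\<Sum>i\<in>{1..4}. (if i = a then T a b else 0) - fmul (T i b) (fmul (gen i) (nu a)))"
    using assms(2)
    by (auto simp: Pi_dz dz_apply lsc_def fmul_diff_right fmul_one_right fmul_zero_right intro!: sum.cong)
  finally show ?thesis
    using assms(1) by (simp add: sum_subtractf)
qed

lemma PiR_apply:
  assumes "a \<in> {1..4}" "b \<in> {1..4}"
  shows "PiR \<theta> S a b =
    S a b - (\<Sum>j\<in>{1..4}. csc (Rm \<theta> j a * Rm \<theta> a b) (fmul (S a j) (fmul (gen j) (nu b))))"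
proof -
  have "PiR \<theta> S a b =
      (\<Sum>i\<in>{1..4}. \<Sum>j\<in>{1..4}. fmul (S i j) (fmul (dz i a) (shift \<theta> a (Pi \<theta> (dz j) b))))"
    unfolding PiR_def by (simp add: sum_fun_apply tlsc_def tens_def)
  also have "\<dots> = (\<Sum>i\<in>{1..4}. if i = a then
      (\<Sum>j\<in>{1..4}. fmul (S a j) (shift \<theta> a (Pi \<theta> (dz j) b))) else 0)"
    by (rule sum.cong) (auto simp: dz_apply fmul_one_left fmul_zero_left fmul_zero_right)
  also have "\<dots> = (\<Sum>j\<in>{1..4}. fmul (S a j) (shift \<theta> a (Pi \<theta> (dz j) b)))"
    using assms(1) by simp
  also have "\<dots> = (\<Sum>j\<in>{1..4}. (if j = b then S a b else 0) -
      csc (Rm \<theta> j a * Rm \<theta> a b) (fmul (S a j) (fmul (gen j) (nu b))))"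
    using assms
    by (auto simp: Pi_dz dz_apply lsc_def fmul_linear fmul_one_right shift_diff shift_cst shift_zero
        shift_fmul shift_gen shift_nu csc_csc intro!: sum.cong)
  finally show ?thesis
    using assms(2) by (simp add: sum_subtractf)
qed

lemma eqTQ_if_componentwise_eq:
  assumes "\<And>a b. a \<in> {1..4} \<Longrightarrow> b \<in> {1..4} \<Longrightarrow> S a b = T a b"
  shows "eqTQ \<theta> S T"
proof -
  have "eqTA \<theta> (S - T) 0"
    using assms by (simp add: eqTA_def eqA_def IA_def ig_zero)
  then show ?thesis
    unfolding eqTQ_def by (rule KQ.kq_eq[OF KQ.kq_zero])
qed

lemma sigma_PiL: "eqTQ \<theta> (sigma \<theta> (PiL \<theta> T)) (PiR \<theta> (sigma \<theta> T))"
proof (rule eqTQ_if_componentwise_eq)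
  fix a b :: nat
  assume a: "a \<in> {1..4}" and b: "b \<in> {1..4}"
  have phase: "Rm \<theta> j a * Rm \<theta> a b * Rm \<theta> a j = Rm \<theta> a b" if "j \<in> {1..4}" for j
    using Rm_mult_transpose[OF that a] by (simp add: mult_ac)
  have "(\<Sum>j\<in>{1..4}. csc (Rm \<theta> j a * Rm \<theta> a b) (fmul (csc (Rm \<theta> a j) (T j a)) (fmul (gen j) (nu b)))) =
      (\<Sum>j\<in>{1..4}. csc (Rm \<theta> a b) (fmul (T j a) (fmul (gen j) (nu b))))"
    by (intro sum.cong) (simp_all add: fmul_csc_left csc_csc phase)
  then show "sigma \<theta> (PiL \<theta> T) a b = PiR \<theta> (sigma \<theta> T) a b"
    by (simp add: PiR_apply[OF a b] PiL_apply[OF b a] sigma_def csc_diff csc_sum)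
qed

lemma sigma_PiR: "eqTQ \<theta> (sigma \<theta> (PiR \<theta> T)) (PiL \<theta> (sigma \<theta> T))"
proof (rule eqTQ_if_componentwise_eq)
  fix a b :: nat
  assume a: "a \<in> {1..4}" and b: "b \<in> {1..4}"
  have phase: "Rm \<theta> a b * (Rm \<theta> j b * Rm \<theta> b a) = Rm \<theta> j b" for j
    using Rm_mult_transpose[OF a b] by (simp add: mult_ac)
  have "(\<Sum>j\<in>{1..4}. csc (Rm \<theta> a b) (csc (Rm \<theta> j b * Rm \<theta> b a) (fmul (T b j) (fmul (gen j) (nu a))))) =
      (\<Sum>j\<in>{1..4}. fmul (csc (Rm \<theta> j b) (T b j)) (fmul (gen j) (nu a)))"
    by (intro sum.cong) (simp_all add: fmul_csc_left csc_csc phase)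
  then show "sigma \<theta> (PiR \<theta> T) a b = PiL \<theta> (sigma \<theta> T) a b"
    by (simp add: PiR_apply[OF b a] PiL_apply[OF a b] sigma_def csc_diff csc_sum)
qed

section \<open>The induced structure on \<open>B\<close>\<close>

lemma eqTB_if_diff_eq:
  assumes "X \<in> KB \<theta>" and "\<And>a b. a \<in> {1..4} \<Longrightarrow> b \<in> {1..4} \<Longrightarrow> S a b - T a b = X a b"
  shows "eqTB \<theta> S T"
proof -
  have "eqTA \<theta> (S - T) X"
    using assms(2) by (simp add: eqTA_def eqA_def IA_def ig_zero)
  then show ?thesis
    unfolding eqTB_def by (rule KB.kb_eq[OF assms(1)])
qed

lemma eqTB_if_componentwise_eq:
  "(\<And>a b. a \<in> {1..4} \<Longrightarrow> b \<in> {1..4} \<Longrightarrow> S a b = T a b) \<Longrightarrow> eqTB \<theta> S T"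
  by (rule eqTB_if_diff_eq[OF KB.kb_zero]) simp

lemma tens_dz_dz: "tens \<theta> (dz i) (dz j) a b = (if a = i \<and> b = j then cst 1 else 0)"
  by (simp add: tens_def dz_apply shift_cst shift_zero fmul_one_left fmul_zero_left fmul_zero_right)

lemma metric_dz_expansion_apply:
  assumes "a \<in> {1..4}" "b \<in> {1..4}"
  shows "(\<Sum>i\<in>{1..4}. \<Sum>j\<in>{1..4}. tlsc (cst (gmat i j)) (tens \<theta> (dz i) (dz j))) a b = cst (gmat a b)"
proof -
  have "(\<Sum>i\<in>{1..4}. \<Sum>j\<in>{1..4}. tlsc (cst (gmat i j)) (tens \<theta> (dz i) (dz j))) a b =
      (\<Sum>i\<in>{1..4}. \<Sum>j\<in>{1..4}. if a = i \<and> b = j then cst (gmat i j) else 0)"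
    by (simp add: sum_fun_apply tlsc_def tens_dz_dz fmul_one_right fmul_zero_right if_distrib
        cong: if_cong)
  also have "\<dots> = cst (gmat a b)"
    unfolding sum_index4 using index_cases[OF assms(1)] index_cases[OF assms(2)] by auto
  finally show ?thesis .
qed

lemma metric_descends: "eqTB \<theta> gA (\<Sum>i\<in>{1..4}. \<Sum>j\<in>{1..4}. tlsc (cst (gmat i j)) (tens \<theta> (dz i) (dz j)))"
  by (rule eqTB_if_componentwise_eq) (simp only: gA_def metric_dz_expansion_apply)

lemma sigma_tens_dz_dz:
  "eqTB \<theta> (sigma \<theta> (tens \<theta> (dz i) (dz j))) (tlsc (cst (Rm \<theta> j i)) (tens \<theta> (dz j) (dz i)))"
  by (rule eqTB_if_componentwise_eq)
    (auto simp: sigma_def tlsc_def tens_dz_dz fmul_one_right fmul_zero_right csc_cst csc_zero_right)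

lemma ginv_tens_Pi_dz_summand:
  assumes i: "i \<in> {1..4}" and j: "j \<in> {1..4}" and a: "a \<in> {1..4}"
  shows "csc 2 (fmul (Pi \<theta> (dz i) a) (shift \<theta> a (Pi \<theta> (dz j) (partner a)))) =
    (if a = i \<and> partner a = j then cst 2 else 0) - (if a = i then csc (Rm \<theta> j a) (mono [j, a]) else 0)
    - (if partner a = j then mono [i, partner a] else 0) + csc (Rm \<theta> j a / 2) (mono [i, partner a, j, a])"
proof -
  have Pi_j: "Pi \<theta> (dz j) (partner a) = dz j (partner a) - csc (1/2) (mono [j, a])"
    using Pi_dz_apply[OF j partner_in_range[OF a], of \<theta>] partner_partner[OF a] by simp
  have "shift \<theta> a (mono [j, a]) = csc (Rm \<theta> j a) (mono [j, a])"
    using Rm_diag[OF a, of \<theta>] by (simp add: shift_mono ph_def)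
  then show ?thesis
    unfolding Pi_dz_apply[OF i a] Pi_j
    by (simp add: dz_apply shift_diff shift_cst shift_zero shift_csc fmul_linear fmul_one_left
        fmul_one_right fmul_mono_mono csc_diff csc_add csc_one csc_csc csc_zero_right csc_cst algebra_simps)
qed

lemma ginv_tens_Pi_dz:
  assumes i: "i \<in> {1..4}" and j: "j \<in> {1..4}"
  shows "ginv (tens \<theta> (Pi \<theta> (dz i)) (Pi \<theta> (dz j))) =
    cst (ginvmat i j) - csc (Rm \<theta> j i) (mono [j, i]) - mono [i, j] +
    (\<Sum>a\<in>{1..4}. csc (Rm \<theta> j a / 2) (mono [i, partner a, j, a]))"
proof -
  have "ginv (tens \<theta> (Pi \<theta> (dz i)) (Pi \<theta> (dz j))) = (\<Sum>a\<in>{1..4}.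
      (if a = i \<and> partner a = j then cst 2 else 0) - (if a = i then csc (Rm \<theta> j a) (mono [j, a]) else 0)
      - (if partner a = j then mono [i, partner a] else 0) + csc (Rm \<theta> j a / 2) (mono [i, partner a, j, a]))"
    unfolding ginv_tens by (rule sum.cong) (simp_all add: ginv_tens_Pi_dz_summand[OF i j])
  also have "\<dots> = (\<Sum>a\<in>{1..4}. if a = i \<and> partner a = j then cst 2 else 0)
      - (\<Sum>a\<in>{1..4}. if a = i then csc (Rm \<theta> j a) (mono [j, a]) else 0)
      - (\<Sum>a\<in>{1..4}. if partner a = j then mono [i, partner a] else 0)
      + (\<Sum>a\<in>{1..4}. csc (Rm \<theta> j a / 2) (mono [i, partner a, j, a]))"
    by (simp only: sum.distrib sum_subtractf)
  also have "(\<Sum>a\<in>{1..4}. if a = i \<and> partner a = j then cst 2 else 0) =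
      (\<Sum>a\<in>{1..4}. if a = i then (if partner i = j then cst 2 else 0) else 0)"
    by (rule sum.cong) auto
  also have "\<dots> = cst (ginvmat i j)"
    using i by (auto simp: sum.delta' ginvmat_def Pm_partner cst_def fun_eq_iff)
  also have "(\<Sum>a\<in>{1..4}. if a = i then csc (Rm \<theta> j a) (mono [j, a]) else 0) = csc (Rm \<theta> j i) (mono [j, i])"
    using i by (simp add: sum.delta')
  also have "(\<Sum>a\<in>{1..4}. if partner a = j then mono [i, partner a] else 0) = mono [i, j]"
  proof -
    have "(\<Sum>a\<in>{1..4}. if partner a = j then mono [i, partner a] else 0) =
        (\<Sum>a\<in>{1..4}. if a = partner j then mono [i, j] else 0)"
      by (rule sum.cong) (use j partner_partner in auto)
    then show ?thesis
      using partner_in_range[OF j] by (simp add: sum.delta')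
  qed
  finally show ?thesis .
qed

lemma partner_sum_reorder_in_IA:
  assumes i: "i \<in> {1..4}" and j: "j \<in> {1..4}"
  shows "(\<Sum>a\<in>{1..4}. csc (Rm \<theta> j a / 2) (mono [i, partner a, j, a])) -
    csc (1/2) (mono [i, j, 3, 1] + mono [i, j, 4, 2] + mono [i, j, 1, 3] + mono [i, j, 2, 4]) \<in> IA \<theta>"
proof -
  have "(\<Sum>a\<in>{1..4}. csc (Rm \<theta> j a / 2)
      (mono ([i] @ partner a # j # [a]) - csc (Rm \<theta> j (partner a)) (mono ([i] @ j # partner a # [a]))))
    \<in> IA \<theta>"
    unfolding IA_def
    by (intro ideal_gen_sum ig_smult mono_swap_in_IA[unfolded IA_def]) (use i j partner_in_range in auto)
  moreover have "(\<Sum>a\<in>{1..4}. csc (Rm \<theta> j a / 2)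
      (mono ([i] @ partner a # j # [a]) - csc (Rm \<theta> j (partner a)) (mono ([i] @ j # partner a # [a])))) =
    (\<Sum>a\<in>{1..4}. csc (Rm \<theta> j a / 2) (mono [i, partner a, j, a])) -
    (\<Sum>a\<in>{1..4}. csc (1/2) (mono [i, j, partner a, a]))"
    unfolding sum_subtractf[symmetric]
    by (rule sum.cong) (use Rm_mult_partner_col[OF j] in \<open>simp_all add: csc_diff csc_csc\<close>)
  moreover have "(\<Sum>a\<in>{1..4}. csc (1/2) (mono [i, j, partner a, a])) =
    csc (1/2) (mono [i, j, 3, 1] + mono [i, j, 4, 2] + mono [i, j, 1, 3] + mono [i, j, 2, 4])"
    by (simp only: sum_index4) (simp add: csc_add algebra_simps)
  ultimately show ?thesis
    by simp
qed

text \<open>The last sum in ginv_tens_Pi_dz comes from g^-1(nu (x) nu). Commuting z^j to the left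
  (X2) and using z^3 z^1 = z^1 z^3, z^4 z^2 = z^2 z^4 (X3, X4) turns it into
  z^i z^j (z^1 z^3 + z^2 z^4), which is z^i z^j modulo f (X5).\<close>

lemma ginv_tens_Pi_dz_in_B:
  assumes i: "i \<in> {1..4}" and j: "j \<in> {1..4}"
  shows "eqB \<theta> (ginv (tens \<theta> (Pi \<theta> (dz i)) (Pi \<theta> (dz j)))) (cst (ginvmat i j) - fmul (gen i) (gen j))"
proof -
  define X1 where "X1 = mono [i, j] - csc (Rm \<theta> j i) (mono [j, i])"
  define X2 where "X2 = (\<Sum>a\<in>{1..4}. csc (Rm \<theta> j a / 2) (mono [i, partner a, j, a])) -
    csc (1/2) (mono [i, j, 3, 1] + mono [i, j, 4, 2] + mono [i, j, 1, 3] + mono [i, j, 2, 4])"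
  define X3 where "X3 = csc (1/2) (mono ([i, j] @ 3 # 1 # []) - csc (Rm \<theta> 1 3) (mono ([i, j] @ 1 # 3 # [])))"
  define X4 where "X4 = csc (1/2) (mono ([i, j] @ 4 # 2 # []) - csc (Rm \<theta> 2 4) (mono ([i, j] @ 2 # 4 # [])))"
  define X5 where "X5 = mono ([i, j] @ 1 # 3 # []) + mono ([i, j] @ 2 # 4 # []) - mono ([i, j] @ [])"
  have IA_in_IB: "x \<in> IA \<theta> \<Longrightarrow> x \<in> IB \<theta>" for x
    using IA_subset_IB by blast
  have "X1 \<in> IB \<theta>"
    unfolding X1_def using mono_swap_in_IA[of "[]" "[]" i j \<theta>] i j by (simp add: IA_in_IB)
  moreover have "X2 \<in> IB \<theta>"
    unfolding X2_def using partner_sum_reorder_in_IA[OF i j] by (rule IA_in_IB)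
  moreover have "X3 \<in> IB \<theta>" "X4 \<in> IB \<theta>"
    unfolding X3_def X4_def IB_def
    by (intro ig_smult IA_in_IB[unfolded IB_def] mono_swap_in_IA; use i j in simp)+
  moreover have "X5 \<in> IB \<theta>"
    unfolding X5_def by (rule mono_f_in_IB) (use i j in auto)
  ultimately have "X1 + X2 + X3 + X4 + X5 \<in> IB \<theta>"
    unfolding IB_def by (intro ig_add)
  moreover have "ginv (tens \<theta> (Pi \<theta> (dz i)) (Pi \<theta> (dz j))) - (cst (ginvmat i j) - fmul (gen i) (gen j)) =
      X1 + X2 + X3 + X4 + X5"
    unfolding ginv_tens_Pi_dz[OF i j] X1_def X2_def X3_def X4_def X5_def
    by (simp add: gen_def fmul_mono_mono Rm_partners csc_one fun_eq_iff algebra_simps)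
  ultimately show ?thesis
    by (simp add: eqB_def)
qed

lemma dA_add: "dA \<theta> (p + q) = dA \<theta> p + dA \<theta> q"
  by (simp add: dA_def fun_eq_iff distrib_right sum.distrib)

lemma dA_diff: "dA \<theta> (p - q) = dA \<theta> p - dA \<theta> q"
  by (simp add: dA_def fun_eq_iff left_diff_distrib sum_subtractf)

lemma dA_csc: "dA \<theta> (csc c p) k = csc c (dA \<theta> p k)"
  by (simp add: dA_def fun_eq_iff sum_distrib_left mult.assoc)

lemma dA_cst: "dA \<theta> (cst c) = 0"
  by (simp add: dA_def cst_def fun_eq_iff)

lemma dA_dz: "dA \<theta> (dz i b) = 0"
  by (simp add: dz_apply dA_cst) (simp add: dA_def fun_eq_iff)

lemma dA_mono_pair:
  "dA \<theta> (mono [x, y]) k = (if k = x then csc (Rm \<theta> y x) (mono [y]) else 0) + (if k = y then mono [x] else 0)"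
proof (rule ext)
  fix v :: "nat list"
  consider "v = []" | c where "v = [c]" | c d r where "v = c # d # r"
    by (metis list.exhaust)
  then show "dA \<theta> (mono [x, y]) k v =
      ((if k = x then csc (Rm \<theta> y x) (mono [y]) else 0) + (if k = y then mono [x] else 0)) v"
  proof cases
    case 3
    then have "mono [x, y] (take m v @ k # drop m v) = 0" for m
      unfolding mono_def by (auto dest: arg_cong[of _ _ length])
    with 3 show ?thesis
      by (simp add: dA_def mono_def)
  qed (auto simp: dA_def mono_def ph_def)
qed

lemma nu_eq_dA_f: "k \<in> {1..4} \<Longrightarrow> nu k = dA \<theta> f_el k"
proof -
  assume k: "k \<in> {1..4}"
  have f_el_monos: "f_el = csc (1/2) (mono [1, 3] + mono [2, 4] - cst 1)"
    by (simp add: f_el_def gen_def fmul_mono_mono)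
  show ?thesis
    unfolding f_el_monos using index_cases[OF k]
    by (auto simp: dA_csc dA_diff dA_add dA_cst nu_partner dA_mono_pair Rm_partners csc_one gen_def)
qed

lemma minus_nu_in_NB: "(\<lambda>k. csc (-1) (nu k)) \<in> NB \<theta>"
proof -
  have "f_el \<in> IB \<theta>"
    unfolding IB_def by (rule ig_gen) simp
  moreover have "eqOA \<theta> (\<lambda>k. csc (-1) (nu k)) (\<lambda>k. csc (-1) (dA \<theta> f_el k))"
    using nu_eq_dA_f by (simp add: eqOA_def eqA_def IA_def ig_zero)
  ultimately show ?thesis
    by (blast intro: NB.nb_eq NB.nb_smult NB.nb_d)
qed

lemma nabla_apply:
  assumes "b \<in> {1..4}"
  shows "nabla \<theta> \<omega> a b = dA \<theta> (\<omega> b) a"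
proof -
  have "nabla \<theta> \<omega> a b = (\<Sum>k\<in>{1..4}. fmul (dA \<theta> (\<omega> k) a) (shift \<theta> a (dz k b)))"
    unfolding nabla_def by (simp add: sum_fun_apply tens_def)
  also have "\<dots> = (\<Sum>k\<in>{1..4}. if k = b then dA \<theta> (\<omega> b) a else 0)"
    by (rule sum.cong) (auto simp: dz_apply shift_cst shift_zero fmul_one_right fmul_zero_right)
  finally show ?thesis
    using assms by simp
qed

lemma nabla_Pi_dz:
  assumes i: "i \<in> {1..4}"
  shows "eqTB \<theta> (nabla \<theta> (Pi \<theta> (dz i)))
    (tlsc (- gen i) (\<Sum>k\<in>{1..4}. \<Sum>l\<in>{1..4}. tlsc (cst (gmat k l)) (tens \<theta> (dz k) (dz l))))"
proof (rule eqTB_if_diff_eq[OF KB.kb_r[OF _ minus_nu_in_NB]])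
  show "polyO (dz i)"
    by (simp add: polyO_def poly_fa_def dz_apply cst_def)
  fix a b :: nat
  assume a: "a \<in> {1..4}" and b: "b \<in> {1..4}"
  have "nabla \<theta> (Pi \<theta> (dz i)) a b = csc (-1/2) ((if a = i then csc (Rm \<theta> (partner b) i) (mono [partner b]) else 0)
      + (if a = partner b then mono [i] else 0))"
    unfolding nabla_apply[OF b] Pi_dz_apply[OF i b] dA_diff dA_dz
    by (simp add: dA_csc dA_mono_pair csc_neg csc_minus_one[symmetric] csc_csc)
  moreover have "tlsc (- gen i) (\<Sum>k\<in>{1..4}. \<Sum>l\<in>{1..4}. tlsc (cst (gmat k l)) (tens \<theta> (dz k) (dz l))) a b
      = - csc (gmat a b) (mono [i])"
    unfolding tlsc_def[of "- gen i"] metric_dz_expansion_apply[OF a b]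
    by (simp add: fmul_cst_right csc_neg gen_def)
  moreover have "gmat a b = (if a = partner b then 1/2 else 0)"
    using a b partner_partner by (auto simp: gmat_def Pm_partner)
  moreover have "tens \<theta> (dz i) (\<lambda>k. csc (- 1) (nu k)) a b =
      (if a = i then csc (- Rm \<theta> (partner b) i / 2) (mono [partner b]) else 0)"
    using Rm_partner_transpose[OF i b, of \<theta>]
    by (simp add: tens_def dz_apply fmul_one_left fmul_zero_left shift_csc shift_mono ph_def nu_partner[OF b]
        csc_csc gen_def)
  ultimately show "nabla \<theta> (Pi \<theta> (dz i)) a b -
      tlsc (- gen i) (\<Sum>k\<in>{1..4}. \<Sum>l\<in>{1..4}. tlsc (cst (gmat k l)) (tens \<theta> (dz k) (dz l))) a b =
      tens \<theta> (dz i) (\<lambda>k. csc (- 1) (nu k)) a b"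
    by (auto simp: csc_add csc_csc csc_zero_left csc_zero_right csc_neg fun_eq_iff)
qed

theorem proposition4p8:
  fixes \<theta> :: real
  shows
   "(\<forall>\<omega>. polyO \<omega> \<longrightarrow>
        eqTA \<theta> (sigma \<theta> (tens \<theta> \<omega> nu)) (tens \<theta> nu \<omega>) \<and>
        eqTA \<theta> (sigma \<theta> (tens \<theta> nu \<omega>)) (tens \<theta> \<omega> nu))
  \<and> (\<forall>T. polyT T \<longrightarrow>
        eqTQ \<theta> (sigma \<theta> (PiL \<theta> T)) (PiR \<theta> (sigma \<theta> T)) \<and>
        eqTQ \<theta> (sigma \<theta> (PiR \<theta> T)) (PiL \<theta> (sigma \<theta> T)))
  \<and> eqTB \<theta> gA (\<Sum>i\<in>{1..4}. \<Sum>j\<in>{1..4}. tlsc (cst (gmat i j)) (tens \<theta> (dz i) (dz j)))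
  \<and> (\<forall>i\<in>{1..4}. \<forall>j\<in>{1..4}.
        eqB \<theta> (ginv (tens \<theta> (Pi \<theta> (dz i)) (Pi \<theta> (dz j))))
               (cst (ginvmat i j) - fmul (gen i) (gen j)))
  \<and> (\<forall>i\<in>{1..4}.
        eqTB \<theta> (nabla \<theta> (Pi \<theta> (dz i)))
          (tlsc (- gen i) (\<Sum>k\<in>{1..4}. \<Sum>l\<in>{1..4}. tlsc (cst (gmat k l)) (tens \<theta> (dz k) (dz l)))))
  \<and> (\<forall>i\<in>{1..4}. \<forall>j\<in>{1..4}.
        eqTB \<theta> (sigma \<theta> (tens \<theta> (dz i) (dz j))) (tlsc (cst (Rm \<theta> j i)) (tens \<theta> (dz j) (dz i))))"
  using sigma_tens_form_nu sigma_tens_nu_form sigma_PiL sigma_PiR metric_descends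
    ginv_tens_Pi_dz_in_B nabla_Pi_dz sigma_tens_dz_dz
  by blast

end
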